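(* The unique double bialgebra morphism from $\mathcal{T}op$ to $\mathcal{C}omp$ is given by the following: for any quasi-poset $T$, \[\phi(T)=\sum_{f\in L(T)} (f^{-1}(1),\ldots,f^{-1}(\max(f))).\]
   Context: $\mathcal{T}op[A]$ is the vector space generated by finite topologies on $A$, identified with quasi-posets $(A,\le_T)$ (open sets are upward-closed sets); $a\sim_T b$ means $a\le_T b$ and $b\le_T a$. It is a double twisted bialgebra: product disjoint union; $\Delta_{A,B}(T)=T_{\mid A}\otimes T_{\mid B}$ if $B$ is open in $T$, $0$ otherwise; $\delta_A(T)=\sum_{\sim\in\mathrm{CE}(T)}T/\sim\otimes T|\sim$ (sum over $T$-compatible equivalences: classes $T$-connected and $\sim_{T/\sim}=\sim$, where $T|\sim$ keeps the relations $x\le_T y$ with $x\sim y$ and $T/\sim$ is the transitive closure of $\le_T$ and $\sim$), whose counit is $\varepsilon'_{\mathcal{T}op}(T)=1$ if $\le_T$ is an equivalence and $0$ otherwise. The morphism $\phi$ is equivalently the unique twisted bialgebra morphism $\mathcal{T}op\to\mathcal{C}omp$ with $\varepsilon'\circ\phi=\varepsilon'_{\mathcal{T}op}$. $\mathcal{C}omp[A]$ has basis the set compositions $(A_1,\ldots,A_k)$ of $A$, with quasi-shuffle product $\uplus$, deconcatenation coproduct $\Delta$, a second coproduct $\delta$, and $\varepsilon'(A_1,\ldots,A_k)=\delta_{k,1}$. $L(T)$ is the set of surjections $f:A\to\{1,\ldots,\max(f)\}$ such that $a\le_T b$ implies $f(a)\le f(b)$, and $a\le_T b$ with $f(a)=f(b)$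 implies $a\sim_T b$. *)

theory Defs
  imports Main
begin

(* Quasi-posets (finite topologies) on A, as relations (a,b) \<in> T meaning a \<le>_T b *)
definition quasi_order :: "'a set \<Rightarrow> ('a \<times> 'a) set \<Rightarrow> bool" where
  "quasi_order A T \<longleftrightarrow> T \<subseteq> A \<times> A \<and> (\<forall>x\<in>A. (x, x) \<in> T) \<and> trans T"

definition open_qo :: "('a \<times> 'a) set \<Rightarrow> 'a set \<Rightarrow> bool" where
  "open_qo T B \<longleftrightarrow> (\<forall>x y. x \<in> B \<and> (x, y) \<in> T \<longrightarrow> y \<in> B)"

definition restr_qo :: "('a \<times> 'a) set \<Rightarrow> 'a set \<Rightarrow> ('a \<times> 'a) set" where
  "restr_qo T A = T \<inter> (A \<times> A)"

definition is_comp :: "'a set \<Rightarrow> 'a set list \<Rightarrow> bool" where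
  "is_comp A c \<longleftrightarrow> (\<forall>X\<in>set c. X \<noteq> {}) \<and> \<Union>(set c) = A \<and>
     (\<forall>i j. i < length c \<and> j < length c \<and> i \<noteq> j \<longrightarrow> c ! i \<inter> c ! j = {})"

(* elements of Comp[A] are represented by their coefficient functions on set compositions *)

definition restr_comp :: "'a set \<Rightarrow> 'a set list \<Rightarrow> 'a set list" where
  "restr_comp A c = filter (\<lambda>X. X \<noteq> {}) (map (\<lambda>X. X \<inter> A) c)"

(* quasi-shuffle product Comp[A] x Comp[B] \<rightarrow> Comp[A \<union> B] (A, B disjoint):
   the quasi-shuffles of (a, b) are exactly the compositions C of A \<union> B with
   restr_comp A C = a and restr_comp B C = b, each with coefficient 1 *)
definition qsh :: "'a set \<Rightarrow> 'a set \<Rightarrow> ('a set list \<Rightarrow> 'k::field) \<Rightarrow> ('a set list \<Rightarrow> 'k)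
     \<Rightarrow> 'a set list \<Rightarrow> 'k" where
  "qsh A B u v C = (if is_comp (A \<union> B) C then u (restr_comp A C) * v (restr_comp B C) else 0)"

(* counit epsilon' of Comp: 1 on compositions with exactly one block
   (and, on Comp[{}], on the empty composition = unit) *)
definition eps'_comp :: "'a set list \<Rightarrow> 'k::field" where
  "eps'_comp c = (if length c \<le> 1 then 1 else 0)"

definition eps'_top :: "('a \<times> 'a) set \<Rightarrow> 'k::field" where
  "eps'_top T = (if (\<forall>x y. (x, y) \<in> T \<longrightarrow> (y, x) \<in> T) then 1 else 0)"

(* A family of linear maps psi_A : Top[A] \<rightarrow> Comp[A], given on the basis:
   psi A T is the element of Comp[A] (coefficient function) image of T.
   Twisted bialgebra morphism Top \<rightarrow> Comp with eps' \<circ> psi = eps'_Top. *)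
definition tb_morphism_eps :: "('a set \<Rightarrow> ('a \<times> 'a) set \<Rightarrow> 'a set list \<Rightarrow> 'k::field) \<Rightarrow> bool" where
  "tb_morphism_eps \<psi> \<longleftrightarrow>
     \<comment> \<open>values lie in Comp[A]\<close>
     (\<forall>A T c. finite A \<and> quasi_order A T \<and> \<not> is_comp A c \<longrightarrow> \<psi> A T c = 0) \<and>
     \<comment> \<open>species morphism: compatible with relabelling by bijections\<close>
     (\<forall>(\<sigma>::'a \<Rightarrow> 'a) A T c. finite A \<and> quasi_order A T \<and> inj_on \<sigma> A \<and> is_comp A c \<longrightarrow>
        \<psi> (\<sigma> ` A) ((\<lambda>(x, y). (\<sigma> x, \<sigma> y)) ` T) (map ((`) \<sigma>) c) = \<psi> A T c) \<and>
     \<comment> \<open>unit\<close>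
     (\<psi> {} {} = (\<lambda>c. if c = [] then 1 else 0)) \<and>
     \<comment> \<open>product\<close>
     (\<forall>A B T T'. finite A \<and> finite B \<and> A \<inter> B = {} \<and> quasi_order A T \<and> quasi_order B T' \<longrightarrow>
        \<psi> (A \<union> B) (T \<union> T') = qsh A B (\<psi> A T) (\<psi> B T')) \<and>
     \<comment> \<open>coproduct: Delta_{A,B} \<circ> psi = (psi_A \<otimes> psi_B) \<circ> Delta_{A,B}\<close>
     (\<forall>A B T c1 c2. finite A \<and> finite B \<and> A \<inter> B = {} \<and> quasi_order (A \<union> B) T \<and>
        is_comp A c1 \<and> is_comp B c2 \<longrightarrow>
        \<psi> (A \<union> B) T (c1 @ c2) =
          (if open_qo T B then \<psi> A (restr_qo T A) c1 * \<psi> B (restr_qo T B) c2 else 0)) \<and>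
     \<comment> \<open>eps' \<circ> psi = eps'_Top\<close>
     (\<forall>A T. finite A \<and> quasi_order A T \<longrightarrow>
        (\<Sum>c\<in>{c. is_comp A c}. \<psi> A T c * eps'_comp c) = eps'_top T)"

definition Lset :: "'a set \<Rightarrow> ('a \<times> 'a) set \<Rightarrow> ('a \<Rightarrow> nat) set" where
  "Lset A T = {f. (\<forall>x. x \<notin> A \<longrightarrow> f x = 0) \<and> (\<exists>m. f ` A = {1..m}) \<and>
      (\<forall>a b. (a, b) \<in> T \<longrightarrow> f a \<le> f b) \<and>
      (\<forall>a b. (a, b) \<in> T \<and> f a = f b \<longrightarrow> (b, a) \<in> T)}"

(* (f^{-1}(1), ..., f^{-1}(max f)) ; max f = card (f ` A) since f ` A = {1..max f} *)
definition comp_of :: "'a set \<Rightarrow> ('a \<Rightarrow> nat) \<Rightarrow> 'a set list" where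
  "comp_of A f = map (\<lambda>i. {x\<in>A. f x = i}) [1..<card (f ` A) + 1]"

definition phi :: "'a set \<Rightarrow> ('a \<times> 'a) set \<Rightarrow> 'a set list \<Rightarrow> 'k::field" where
  "phi A T c = of_nat (card {f \<in> Lset A T. comp_of A f = c})"

end

theory Submission
  imports Defs
begin

text \<open>Any double bialgebra morphism \<open>\<psi>\<close> is determined recursively: splitting a
  composition \<open>(X, A\<^sub>2, \<dots>, A\<^sub>k)\<close> of \<open>A\<close> as \<open>X | A - X\<close>, the coproduct axiom gives
  \<open>\<psi>(T)(X, A\<^sub>2, \<dots>, A\<^sub>k) = \<psi>(T|X)(X) \<psi>(T|(A - X))(A\<^sub>2, \<dots>, A\<^sub>k)\<close> if \<open>A - X\<close> is open
  and \<open>0\<close> otherwise, and the counit axiom on the one-block composition gives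
  \<open>\<psi>(T|X)(X) = \<epsilon>'(T|X)\<close>. Hence there is at most one such morphism.

  For existence, a surjection \<open>f\<close> lies in \<open>L(T)\<close> exactly when every upper level set
  \<open>f\<^sup>-\<^sup>1{i, \<dots>, max f}\<close> is open and \<open>T\<close> is symmetric on every level set \<open>f\<^sup>-\<^sup>1(i)\<close>. So
  \<open>\<phi>(T)\<close> is the sum of the compositions whose final unions are open and whose blocks
  are \<open>T\<close>-symmetric, and each axiom for \<open>\<phi>\<close> becomes a statement about this
  combinatorial condition, proved by induction on the composition.\<close>

section \<open>Set compositions\<close>

lemma is_comp_iff_pairwise_disjnt:
  "is_comp A c \<longleftrightarrow> {} \<notin> set c \<and> \<Union>(set c) = A \<and> distinct c \<and> pairwise disjnt (set c)"
proof -
  have "distinct c \<and> pairwise disjnt (set c) \<longleftrightarrow>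
      (\<forall>i j. i < length c \<and> j < length c \<and> i \<noteq> j \<longrightarrow> c ! i \<inter> c ! j = {})"
    if "{} \<notin> set c"
    using that unfolding distinct_conv_nth pairwise_def disjnt_def
    by (smt (verit, best) in_set_conv_nth inf_idem)
  then show ?thesis
    unfolding is_comp_def by blast
qed

lemma is_comp_Nil [simp]: "is_comp A [] \<longleftrightarrow> A = {}"
  by (auto simp: is_comp_def)

lemma is_comp_Cons:
  "is_comp A (X # cs) \<longleftrightarrow>
     X \<noteq> {} \<and> X \<inter> \<Union>(set cs) = {} \<and> A = X \<union> \<Union>(set cs) \<and> is_comp (\<Union>(set cs)) cs"
  unfolding is_comp_iff_pairwise_disjnt by (simp add: pairwise_insert disjnt_def) blast

lemma is_comp_empty: "is_comp {} c \<longleftrightarrow> c = []"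
  by (cases c) (simp_all add: is_comp_Cons)

lemma is_comp_singleton: "X \<noteq> {} \<Longrightarrow> is_comp X [X]"
  by (simp add: is_comp_Cons)

lemma is_comp_Union: "is_comp A c \<Longrightarrow> \<Union>(set c) = A"
  by (simp add: is_comp_def)

lemma is_comp_append:
  "is_comp A u \<Longrightarrow> is_comp B v \<Longrightarrow> A \<inter> B = {} \<Longrightarrow> is_comp (A \<union> B) (u @ v)"
  by (induction u arbitrary: A) (auto simp: is_comp_Cons is_comp_Union)

lemma finite_is_comp: "finite A \<Longrightarrow> finite {c. is_comp A c}"
  by (rule finite_subset[OF _ finite_subset_distinct[OF finite_Pow_iff[THEN iffD2]]])
    (auto simp: is_comp_iff_pairwise_disjnt)

lemma is_comp_length_le_1: "is_comp A c \<Longrightarrow> length c \<le> 1 \<Longrightarrow> c = (if A = {} then [] else [A])"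
  by (cases c) (auto simp: is_comp_Cons)

definition block_index :: "'a set list \<Rightarrow> 'a \<Rightarrow> nat" where
  "block_index c x = (THE i. i < length c \<and> x \<in> c ! i)"

lemma block_index_eq: "is_comp A c \<Longrightarrow> i < length c \<Longrightarrow> x \<in> c ! i \<Longrightarrow> block_index c x = i"
  unfolding block_index_def is_comp_def by (rule the_equality) blast+

lemma block_index:
  assumes "is_comp A c" "x \<in> A"
  shows "block_index c x < length c" "x \<in> c ! block_index c x"
proof -
  obtain i where "i < length c" "x \<in> c ! i"
    using assms by (auto simp: is_comp_def in_set_conv_nth)
  with block_index_eq[OF assms(1)] show "block_index c x < length c" "x \<in> c ! block_index c x"
    by simp_all
qed

definition block_fun :: "'a set \<Rightarrow> 'a set list \<Rightarrow> 'a \<Rightarrow> nat" where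
  "block_fun A c x = (if x \<in> A then Suc (block_index c x) else 0)"

lemma length_comp_of: "length (comp_of A f) = card (f ` A)"
  by (simp add: comp_of_def)

lemma nth_comp_of: "i < length (comp_of A f) \<Longrightarrow> comp_of A f ! i = {x \<in> A. f x = Suc i}"
  by (simp add: comp_of_def del: upt_Suc)

lemma is_comp_comp_of:
  assumes "f ` A = {1..m}"
  shows "is_comp A (comp_of A f)"
proof -
  have len: "length (comp_of A f) = m"
    using assms by (simp add: length_comp_of)
  have "comp_of A f ! i \<noteq> {}" if "i < m" for i
  proof -
    have "Suc i \<in> f ` A"
      using that assms by simp
    then show ?thesis
      using that len by (auto simp: nth_comp_of)
  qed
  moreover have "x \<in> \<Union>(set (comp_of A f))" if "x \<in> A" for x
  proof -
    have "f x \<in> {1..m}"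
      using that assms by blast
    then have "f x - 1 < m" "x \<in> comp_of A f ! (f x - 1)"
      using that len by (auto simp: nth_comp_of)
    then show ?thesis
      using len nth_mem by blast
  qed
  moreover have "\<Union>(set (comp_of A f)) \<subseteq> A"
    by (auto simp: in_set_conv_nth nth_comp_of)
  moreover have "comp_of A f ! i \<inter> comp_of A f ! j = {}" if "i < m" "j < m" "i \<noteq> j" for i j
    using that len by (auto simp: nth_comp_of)
  ultimately show ?thesis
    unfolding is_comp_def using len by (auto simp: in_set_conv_nth)
qed

lemma block_fun_image: "is_comp A c \<Longrightarrow> block_fun A c ` A = {1..length c}"
proof (intro equalityI subsetI)
  fix k assume c: "is_comp A c" and k: "k \<in> {1..length c}"
  then have "k - 1 < length c"
    by auto
  then obtain x where x: "x \<in> c ! (k - 1)"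
    using c nth_mem[of "k - 1" c] by (fastforce simp: is_comp_def)
  then have "x \<in> A"
    using c \<open>k - 1 < length c\<close> nth_mem[of "k - 1" c] by (auto simp: is_comp_def)
  moreover have "block_fun A c x = k"
    using block_index_eq[OF c \<open>k - 1 < length c\<close> x] k \<open>x \<in> A\<close> by (simp add: block_fun_def)
  ultimately show "k \<in> block_fun A c ` A"
    by (metis imageI)
qed (auto simp: block_fun_def block_index Suc_le_eq)

lemma comp_of_block_fun:
  assumes c: "is_comp A c"
  shows "comp_of A (block_fun A c) = c"
proof (rule nth_equalityI)
  show len: "length (comp_of A (block_fun A c)) = length c"
    using block_fun_image[OF c] by (simp add: length_comp_of)
  fix i assume "i < length (comp_of A (block_fun A c))"
  then have i: "i < length c"
    using len by simp
  have "c ! i \<subseteq> A"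
    using c i nth_mem by (fastforce simp: is_comp_def)
  then show "comp_of A (block_fun A c) ! i = c ! i"
    using i len block_index[OF c] block_index_eq[OF c i]
    by (auto simp: nth_comp_of block_fun_def)
qed

lemma comp_of_inj:
  assumes f: "\<forall>x. x \<notin> A \<longrightarrow> f x = 0" "f ` A = {1..m}"
    and g: "\<forall>x. x \<notin> A \<longrightarrow> g x = 0"
    and eq: "comp_of A f = comp_of A g"
  shows "f = g"
proof
  fix x
  show "f x = g x"
  proof (cases "x \<in> A")
    case True
    have "f x \<in> {1..m}"
      using True f(2) by blast
    then have "f x - 1 < length (comp_of A f)" "f x = Suc (f x - 1)"
      using f(2) by (auto simp: length_comp_of)
    then have "x \<in> {y \<in> A. g y = f x}"
      using True eq nth_comp_of[of "f x - 1" A f] nth_comp_of[of "f x - 1" A g] by auto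
    then show ?thesis
      by simp
  qed (use f g in simp)
qed

section \<open>Compositions compatible with a quasi-order\<close>

lemma quasi_order_subset: "quasi_order A T \<Longrightarrow> T \<subseteq> A \<times> A"
  by (simp add: quasi_order_def)

fun compatible_comp :: "('a \<times> 'a) set \<Rightarrow> 'a set list \<Rightarrow> bool" where
  "compatible_comp T [] = True"
| "compatible_comp T (X # cs) \<longleftrightarrow>
     open_qo T (X \<union> \<Union>(set cs)) \<and> sym_on X T \<and> compatible_comp T cs"

lemma compatible_comp_conv_nth:
  "compatible_comp T c \<longleftrightarrow>
     (\<forall>i < length c. open_qo T (\<Union>(set (drop i c))) \<and> sym_on (c ! i) T)"
proof (induction c)
  case (Cons X cs)
  then show ?case
    by (auto simp: less_Suc_eq_0_disj)
qed simp

lemma Lset_iff_compatible_comp: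
  assumes T: "T \<subseteq> A \<times> A" and f: "\<forall>x. x \<notin> A \<longrightarrow> f x = 0" "f ` A = {1..m}"
  shows "f \<in> Lset A T \<longleftrightarrow> compatible_comp T (comp_of A f)"
proof -
  have len: "length (comp_of A f) = m"
    using f(2) by (simp add: length_comp_of)
  have "\<Union>(set (drop i (comp_of A f))) = {x \<in> A. Suc i \<le> f x}" if "i < m" for i
  proof -
    have "drop i (comp_of A f) = map (\<lambda>k. {x \<in> A. f x = k}) [Suc i..<Suc m]"
      using f(2) by (simp add: comp_of_def drop_map del: upt_Suc)
    moreover have "\<forall>x\<in>A. f x \<le> m"
      using f(2) by auto
    ultimately show ?thesis
      using that by (auto simp del: upt_Suc)
  qed
  then have compatible_iff: "compatible_comp T (comp_of A f) \<longleftrightarrow>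
      (\<forall>i < m. open_qo T {x \<in> A. Suc i \<le> f x} \<and> sym_on {x \<in> A. f x = Suc i} T)"
    unfolding compatible_comp_conv_nth len by (simp add: nth_comp_of len)
  show ?thesis
  proof
    assume "f \<in> Lset A T"
    then have "\<forall>a b. (a, b) \<in> T \<longrightarrow> f a \<le> f b" "\<forall>a b. (a, b) \<in> T \<and> f a = f b \<longrightarrow> (b, a) \<in> T"
      by (simp_all add: Lset_def)
    then show "compatible_comp T (comp_of A f)"
      unfolding compatible_iff open_qo_def sym_on_def using T by fastforce
  next
    assume compatible: "compatible_comp T (comp_of A f)"
    have "f a \<le> f b \<and> (f a = f b \<longrightarrow> (b, a) \<in> T)" if ab: "(a, b) \<in> T" for a b
    proof -
      have "a \<in> A" "b \<in> A"
        using ab T by auto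
      moreover have "f a \<in> {1..m}"
        using \<open>a \<in> A\<close> f(2) by blast
      ultimately have "f a - 1 < m" and Suc_eq: "Suc (f a - 1) = f a"
        by auto
      then have "open_qo T {x \<in> A. Suc (f a - 1) \<le> f x}" "sym_on {x \<in> A. f x = Suc (f a - 1)} T"
        using compatible unfolding compatible_iff by blast+
      then have upper: "open_qo T {x \<in> A. f a \<le> f x}" and level: "sym_on {x \<in> A. f x = f a} T"
        unfolding Suc_eq .
      have "f a \<le> f b"
        using upper ab \<open>a \<in> A\<close> unfolding open_qo_def by blast
      moreover have "(b, a) \<in> T" if "f a = f b"
        using level ab \<open>a \<in> A\<close> \<open>b \<in> A\<close> that unfolding sym_on_def by simp
      ultimately show ?thesis
        by blast
    qed
    then show "f \<in> Lset A T"
      using f by (auto simp: Lset_def)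
  qed
qed

lemma LsetE:
  assumes "f \<in> Lset A T"
  obtains m where "\<forall>x. x \<notin> A \<longrightarrow> f x = 0" "f ` A = {1..m}"
  using assms by (auto simp: Lset_def)

lemma phi_eq_indicator:
  assumes "quasi_order A T"
  shows "phi A T c = (if is_comp A c \<and> compatible_comp T c then 1 else 0)"
proof -
  have T: "T \<subseteq> A \<times> A"
    using assms by (rule quasi_order_subset)
  have L_fibre: "{f \<in> Lset A T. comp_of A f = c} = (if is_comp A c \<and> compatible_comp T c then {block_fun A c} else {})"
  proof (cases "is_comp A c \<and> compatible_comp T c")
    case True
    then have c: "is_comp A c"
      by simp
    have "block_fun A c \<in> Lset A T"
      using True Lset_iff_compatible_comp[OF T _ block_fun_image[OF c]] comp_of_block_fun[OF c]
      by (simp add: block_fun_def)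
    moreover have "f = block_fun A c" if f: "f \<in> Lset A T" "comp_of A f = c" for f
      using f(1)
    proof (rule LsetE)
      fix m assume "\<forall>x. x \<notin> A \<longrightarrow> f x = 0" "f ` A = {1..m}"
      then show ?thesis
        using comp_of_inj[of A f m "block_fun A c"] f(2) comp_of_block_fun[OF c]
        by (simp add: block_fun_def)
    qed
    ultimately have "{f \<in> Lset A T. comp_of A f = c} = {block_fun A c}"
      using comp_of_block_fun[OF c] by blast
    then show ?thesis
      using True by simp
  next
    case False
    have "is_comp A (comp_of A f) \<and> compatible_comp T (comp_of A f)" if f: "f \<in> Lset A T" for f
      using f
    proof (rule LsetE)
      fix m assume "\<forall>x. x \<notin> A \<longrightarrow> f x = 0" "f ` A = {1..m}"
      then show ?thesis
        using f is_comp_comp_of Lset_iff_compatible_comp[OF T] by blast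
    qed
    then show ?thesis
      using False by auto
  qed
  show ?thesis
    unfolding phi_def L_fibre by simp
qed

section \<open>The morphism axioms for \<open>phi\<close>\<close>

lemma map_prod_image_mem_iff:
  assumes "inj_on \<sigma> A" "T \<subseteq> A \<times> A" "a \<in> A" "b \<in> A"
  shows "(\<sigma> a, \<sigma> b) \<in> map_prod \<sigma> \<sigma> ` T \<longleftrightarrow> (a, b) \<in> T"
  using inj_on_image_mem_iff[OF map_prod_inj_on[OF assms(1,1)], of "(a, b)" T] assms by auto

lemma quasi_order_map_prod_image:
  assumes inj: "inj_on \<sigma> A" and T: "quasi_order A T"
  shows "quasi_order (\<sigma> ` A) (map_prod \<sigma> \<sigma> ` T)"
proof -
  have sub: "T \<subseteq> A \<times> A"
    using T by (rule quasi_order_subset)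
  have "trans (map_prod \<sigma> \<sigma> ` T)"
  proof (rule transI, clarsimp)
    fix a b b' c assume "(a, b) \<in> T" "(b', c) \<in> T" "\<sigma> b = \<sigma> b'"
    moreover from this have "b = b'"
      using inj sub by (auto dest: inj_onD)
    ultimately show "(\<sigma> a, \<sigma> c) \<in> map_prod \<sigma> \<sigma> ` T"
      using T by (auto simp: quasi_order_def dest: transD)
  qed
  then show ?thesis
    using T by (auto simp: quasi_order_def)
qed

lemma open_qo_map_prod_image:
  assumes "inj_on \<sigma> A" "T \<subseteq> A \<times> A" "V \<subseteq> A"
  shows "open_qo (map_prod \<sigma> \<sigma> ` T) (\<sigma> ` V) \<longleftrightarrow> open_qo T V"
proof
  assume image_open: "open_qo (map_prod \<sigma> \<sigma> ` T) (\<sigma> ` V)"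
  show "open_qo T V"
    unfolding open_qo_def
  proof (intro allI impI, elim conjE)
    fix x y assume "x \<in> V" "(x, y) \<in> T"
    then have "\<sigma> y \<in> \<sigma> ` V"
      using image_open unfolding open_qo_def by blast
    moreover have "y \<in> A"
      using \<open>(x, y) \<in> T\<close> assms(2) by blast
    ultimately show "y \<in> V"
      using inj_on_image_mem_iff[OF assms(1) _ assms(3)] by simp
  qed
next
  assume V_open: "open_qo T V"
  show "open_qo (map_prod \<sigma> \<sigma> ` T) (\<sigma> ` V)"
    unfolding open_qo_def
  proof (intro allI impI, elim conjE)
    fix u w assume "u \<in> \<sigma> ` V" "(u, w) \<in> map_prod \<sigma> \<sigma> ` T"
    then obtain x a b where x: "x \<in> V" "u = \<sigma> x" and ab: "(a, b) \<in> T" "u = \<sigma> a" "w = \<sigma> b"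
      by auto
    have "a = x"
      using x ab assms by (auto dest: inj_onD)
    then have "b \<in> V"
      using V_open x ab unfolding open_qo_def by blast
    then show "w \<in> \<sigma> ` V"
      using ab by blast
  qed
qed

lemma sym_on_map_prod_image:
  assumes "inj_on \<sigma> A" "T \<subseteq> A \<times> A" "X \<subseteq> A"
  shows "sym_on (\<sigma> ` X) (map_prod \<sigma> \<sigma> ` T) \<longleftrightarrow> sym_on X T"
proof -
  have "(\<sigma> x, \<sigma> y) \<in> map_prod \<sigma> \<sigma> ` T \<longleftrightarrow> (x, y) \<in> T" if "x \<in> X" "y \<in> X" for x y
    using that assms(3) by (intro map_prod_image_mem_iff[OF assms(1,2)]) auto
  then show ?thesis
    unfolding sym_on_def by (simp add: ball_simps)
qed

lemma is_comp_image:
  "inj_on \<sigma> A \<Longrightarrow> is_comp A c \<Longrightarrow> is_comp (\<sigma> ` A) (map ((`) \<sigma>) c)"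
proof (induction c arbitrary: A)
  case (Cons X cs)
  then have "X \<noteq> {}" "X \<inter> \<Union>(set cs) = {}" "A = X \<union> \<Union>(set cs)" "is_comp (\<Union>(set cs)) cs"
    by (simp_all add: is_comp_Cons)
  moreover have "\<sigma> ` X \<inter> \<sigma> ` \<Union>(set cs) = \<sigma> ` (X \<inter> \<Union>(set cs))"
    using Cons.prems(1) calculation(3) by (simp add: inj_on_image_Int)
  moreover have "is_comp (\<sigma> ` \<Union>(set cs)) (map ((`) \<sigma>) cs)"
    using Cons.IH Cons.prems(1) calculation(3,4) inj_on_subset by blast
  ultimately show ?case
    by (simp add: is_comp_Cons image_Union image_Un)
qed simp

lemma compatible_comp_image:
  assumes "inj_on \<sigma> A" "T \<subseteq> A \<times> A"
  shows "\<Union>(set c) \<subseteq> A \<Longrightarrow>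
    compatible_comp (map_prod \<sigma> \<sigma> ` T) (map ((`) \<sigma>) c) \<longleftrightarrow> compatible_comp T c"
proof (induction c)
  case (Cons X cs)
  have "\<sigma> ` X \<union> \<Union>(set (map ((`) \<sigma>) cs)) = \<sigma> ` (X \<union> \<Union>(set cs))"
    by (auto simp: image_Union)
  then show ?case
    using Cons open_qo_map_prod_image[OF assms, of "X \<union> \<Union>(set cs)"]
      sym_on_map_prod_image[OF assms, of X]
    by simp
qed simp

lemma phi_rename:
  assumes "quasi_order A T" "inj_on \<sigma> A" "is_comp A c"
  shows "phi (\<sigma> ` A) (map_prod \<sigma> \<sigma> ` T) (map ((`) \<sigma>) c) = phi A T c"
  unfolding phi_eq_indicator[OF quasi_order_map_prod_image[OF assms(2,1)]] phi_eq_indicator[OF assms(1)]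
  using assms(3) is_comp_image[OF assms(2,3)] is_comp_Union[OF assms(3)]
    compatible_comp_image[OF assms(2) quasi_order_subset[OF assms(1)], of c]
  by simp

lemma restr_comp_Nil [simp]: "restr_comp A [] = []"
  by (simp add: restr_comp_def)

lemma restr_comp_Cons [simp]:
  "restr_comp A (X # cs) = (if X \<inter> A = {} then restr_comp A cs else (X \<inter> A) # restr_comp A cs)"
  by (simp add: restr_comp_def)

lemma Union_restr_comp [simp]: "\<Union>(set (restr_comp A c)) = \<Union>(set c) \<inter> A"
  by (induction c) auto

lemma is_comp_restr_comp: "is_comp D c \<Longrightarrow> is_comp (D \<inter> A) (restr_comp A c)"
proof (induction c arbitrary: D)
  case (Cons X cs)
  then have "X \<inter> \<Union>(set cs) = {}" "D = X \<union> \<Union>(set cs)"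
    and "is_comp (\<Union>(set cs) \<inter> A) (restr_comp A cs)"
    by (simp_all add: is_comp_Cons)
  then show ?case
    by (auto simp: is_comp_Cons Int_Un_distrib2)
qed simp

lemma open_qo_Union_if_compatible_comp: "compatible_comp T c \<Longrightarrow> open_qo T (\<Union>(set c))"
  by (cases c) (auto simp: open_qo_def)

lemma compatible_comp_restr_comp_Cons:
  "compatible_comp T (restr_comp A (X # cs)) \<longleftrightarrow>
     open_qo T ((X \<union> \<Union>(set cs)) \<inter> A) \<and> sym_on (X \<inter> A) T \<and> compatible_comp T (restr_comp A cs)"
proof (cases "X \<inter> A = {}")
  case True
  then have "(X \<union> \<Union>(set cs)) \<inter> A = \<Union>(set (restr_comp A cs))"
    by auto
  then show ?thesis
    using True open_qo_Union_if_compatible_comp[of T "restr_comp A cs"] by (auto simp: sym_on_def)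
next
  case False
  have "(X \<union> \<Union>(set cs)) \<inter> A = (X \<inter> A) \<union> \<Union>(set (restr_comp A cs))"
    by auto
  then show ?thesis
    using False by simp
qed

lemma compatible_comp_Un:
  assumes "T \<subseteq> A \<times> A" "T' \<subseteq> B \<times> B" "A \<inter> B = {}"
  shows "compatible_comp (T \<union> T') c \<longleftrightarrow>
    compatible_comp T (restr_comp A c) \<and> compatible_comp T' (restr_comp B c)"
proof (induction c)
  case (Cons X cs)
  have "open_qo (T \<union> T') V \<longleftrightarrow> open_qo T (V \<inter> A) \<and> open_qo T' (V \<inter> B)" for V
    using assms(1,2) unfolding open_qo_def by blast
  moreover have "sym_on X (T \<union> T') \<longleftrightarrow> sym_on (X \<inter> A) T \<and> sym_on (X \<inter> B) T'"
    using assms unfolding sym_on_def by blast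
  ultimately show ?case
    unfolding compatible_comp_restr_comp_Cons compatible_comp.simps Cons.IH by blast
qed simp

lemma quasi_order_Un:
  "A \<inter> B = {} \<Longrightarrow> quasi_order A T \<Longrightarrow> quasi_order B T' \<Longrightarrow> quasi_order (A \<union> B) (T \<union> T')"
  unfolding quasi_order_def trans_def by blast

lemma phi_mult:
  assumes "A \<inter> B = {}" "quasi_order A T" "quasi_order B T'"
  shows "phi (A \<union> B) (T \<union> T') = qsh A B (phi A T) (phi B T')"
proof
  fix C
  have "is_comp A (restr_comp A C)" "is_comp B (restr_comp B C)" if "is_comp (A \<union> B) C"
    using is_comp_restr_comp[OF that, of A] is_comp_restr_comp[OF that, of B] by (simp_all add: Int_absorb1)
  then show "phi (A \<union> B) (T \<union> T') C = qsh A B (phi A T) (phi B T') C"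
    unfolding qsh_def phi_eq_indicator[OF quasi_order_Un[OF assms]] phi_eq_indicator[OF assms(2)]
      phi_eq_indicator[OF assms(3)]
      compatible_comp_Un[OF quasi_order_subset[OF assms(2)] quasi_order_subset[OF assms(3)] assms(1)]
    by simp
qed

lemma quasi_order_restr_qo: "quasi_order D T \<Longrightarrow> A \<subseteq> D \<Longrightarrow> quasi_order A (restr_qo T A)"
  unfolding quasi_order_def restr_qo_def trans_def by blast

lemma compatible_comp_restr_qo:
  assumes "open_qo T B"
  shows "\<Union>(set c) \<subseteq> B \<Longrightarrow> compatible_comp (restr_qo T B) c \<longleftrightarrow> compatible_comp T c"
proof (induction c)
  case (Cons X cs)
  have "open_qo (restr_qo T B) V \<longleftrightarrow> open_qo T V" if "V \<subseteq> B" for V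
    using that assms unfolding open_qo_def restr_qo_def by blast
  moreover have "sym_on X (restr_qo T B) \<longleftrightarrow> sym_on X T"
    using Cons.prems(1) unfolding sym_on_def restr_qo_def by (auto simp: subset_iff)
  ultimately show ?case
    using Cons by simp
qed simp

lemma compatible_comp_append:
  assumes "open_qo T B" "T \<subseteq> (A \<union> B) \<times> (A \<union> B)" "A \<inter> B = {}" "\<Union>(set v) = B"
  shows "\<Union>(set u) \<subseteq> A \<Longrightarrow>
    compatible_comp T (u @ v) \<longleftrightarrow> compatible_comp (restr_qo T A) u \<and> compatible_comp T v"
proof (induction u)
  case (Cons X cs)
  have "open_qo T (V \<union> B) \<longleftrightarrow> open_qo (restr_qo T A) V" if "V \<subseteq> A" for V
    using that assms(1-3) unfolding open_qo_def restr_qo_def by blast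
  moreover have "sym_on X (restr_qo T A) \<longleftrightarrow> sym_on X T"
    using Cons.prems(1) unfolding sym_on_def restr_qo_def by (auto simp: subset_iff)
  moreover have "X \<union> \<Union>(set (cs @ v)) = (X \<union> \<Union>(set cs)) \<union> B"
    using assms(4) by auto
  ultimately show ?case
    using Cons by simp
qed simp

lemma open_qo_if_compatible_comp_append: "compatible_comp T (u @ v) \<Longrightarrow> open_qo T (\<Union>(set v))"
  by (induction u) (auto intro: open_qo_Union_if_compatible_comp)

lemma phi_comult:
  assumes disj: "A \<inter> B = {}" and T: "quasi_order (A \<union> B) T"
    and c1: "is_comp A c1" and c2: "is_comp B c2"
  shows "phi (A \<union> B) T (c1 @ c2) =
     (if open_qo T B then phi A (restr_qo T A) c1 * phi B (restr_qo T B) c2 else 0)"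
proof -
  have "is_comp (A \<union> B) (c1 @ c2)"
    using is_comp_append[OF c1 c2 disj] .
  moreover have "compatible_comp T (c1 @ c2) \<longleftrightarrow>
      open_qo T B \<and> compatible_comp (restr_qo T A) c1 \<and> compatible_comp (restr_qo T B) c2"
    using compatible_comp_append[OF _ quasi_order_subset[OF T] disj is_comp_Union[OF c2], of c1]
      compatible_comp_restr_qo[of T B c2] open_qo_if_compatible_comp_append[of T c1 c2]
      is_comp_Union[OF c1] is_comp_Union[OF c2]
    by auto
  ultimately show ?thesis
    unfolding phi_eq_indicator[OF T] phi_eq_indicator[OF quasi_order_restr_qo[OF T Un_upper1]]
      phi_eq_indicator[OF quasi_order_restr_qo[OF T Un_upper2]]
    using c1 c2 by simp
qed

lemma sum_eps'_comp:
  assumes "finite A"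
  shows "(\<Sum>c\<in>{c. is_comp A c}. g c * eps'_comp c) = g (if A = {} then [] else [A])"
proof -
  define c0 where "c0 = (if A = {} then [] else [A])"
  have "g c * eps'_comp c = (if c = c0 then g c else 0)" if "is_comp A c" for c
  proof -
    have "length c \<le> 1 \<longleftrightarrow> c = c0"
      using is_comp_length_le_1[OF that] by (auto simp: c0_def)
    then show ?thesis
      by (simp add: eps'_comp_def)
  qed
  then have "(\<Sum>c\<in>{c. is_comp A c}. g c * eps'_comp c) = (\<Sum>c\<in>{c. is_comp A c}. if c = c0 then g c else 0)"
    by (intro sum.cong) auto
  also have "\<dots> = g c0"
    using sum.delta[OF finite_is_comp[OF assms], of c0 g] is_comp_singleton[of A]
    by (simp add: c0_def)
  finally show ?thesis
    unfolding c0_def .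
qed

lemma phi_counit:
  assumes "finite A" "quasi_order A T"
  shows "(\<Sum>c\<in>{c. is_comp A c}. phi A T c * eps'_comp c) = eps'_top T"
proof (cases "A = {}")
  case True
  then have "T = {}"
    using quasi_order_subset[OF assms(2)] by simp
  then show ?thesis
    using True unfolding sum_eps'_comp[OF assms(1)] phi_eq_indicator[OF assms(2)] eps'_top_def
    by simp
next
  case False
  have "compatible_comp T [A] \<longleftrightarrow> (\<forall>x y. (x, y) \<in> T \<longrightarrow> (y, x) \<in> T)"
    using quasi_order_subset[OF assms(2)] by (simp add: open_qo_def sym_on_def) blast
  then show ?thesis
    using False is_comp_singleton[OF False]
    unfolding sum_eps'_comp[OF assms(1)] phi_eq_indicator[OF assms(2)] eps'_top_def
    by simp
qed

lemma tb_morphism_phi: "tb_morphism_eps phi"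
  unfolding tb_morphism_eps_def map_prod_def[symmetric]
proof (intro conjI)
  show "\<forall>A T c. finite A \<and> quasi_order A T \<and> \<not> is_comp A c \<longrightarrow> phi A T c = 0"
    by (simp add: phi_eq_indicator)
  show "\<forall>\<sigma> A T c. finite A \<and> quasi_order A T \<and> inj_on \<sigma> A \<and> is_comp A c \<longrightarrow>
      phi (\<sigma> ` A) (map_prod \<sigma> \<sigma> ` T) (map ((`) \<sigma>) c) = phi A T c"
    using phi_rename by blast
  show "phi {} {} = (\<lambda>c. if c = [] then 1 else 0)"
    by (simp add: fun_eq_iff phi_eq_indicator quasi_order_def is_comp_empty)
  show "\<forall>A B T T'. finite A \<and> finite B \<and> A \<inter> B = {} \<and> quasi_order A T \<and> quasi_order B T' \<longrightarrow>
      phi (A \<union> B) (T \<union> T') = qsh A B (phi A T) (phi B T')"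
    using phi_mult by blast
  show "\<forall>A B T c1 c2. finite A \<and> finite B \<and> A \<inter> B = {} \<and> quasi_order (A \<union> B) T \<and>
      is_comp A c1 \<and> is_comp B c2 \<longrightarrow>
      phi (A \<union> B) T (c1 @ c2) =
        (if open_qo T B then phi A (restr_qo T A) c1 * phi B (restr_qo T B) c2 else 0)"
    using phi_comult by blast
  show "\<forall>A T. finite A \<and> quasi_order A T \<longrightarrow>
      (\<Sum>c\<in>{c. is_comp A c}. phi A T c * eps'_comp c) = eps'_top T"
    using phi_counit by blast
qed

section \<open>Uniqueness\<close>

lemma tb_morphism_eq_0:
  "tb_morphism_eps \<psi> \<Longrightarrow> finite A \<Longrightarrow> quasi_order A T \<Longrightarrow> \<not> is_comp A c \<Longrightarrow> \<psi> A T c = 0"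
  by (simp add: tb_morphism_eps_def)

lemma tb_morphism_Nil:
  assumes "tb_morphism_eps \<psi>" "finite A" "quasi_order A T"
  shows "\<psi> A T [] = (if A = {} then 1 else 0)"
proof (cases "A = {}")
  case True
  then have "T = {}"
    using quasi_order_subset[OF assms(3)] by simp
  then show ?thesis
    using True assms(1) by (simp add: tb_morphism_eps_def)
qed (simp add: tb_morphism_eq_0[OF assms])

lemma tb_morphism_Cons:
  assumes tb: "tb_morphism_eps \<psi>" and A: "finite A" and T: "quasi_order A T"
    and c: "is_comp A (X # cs)"
  shows "\<psi> A T (X # cs) =
    (if open_qo T (\<Union>(set cs))
     then eps'_top (restr_qo T X) * \<psi> (\<Union>(set cs)) (restr_qo T (\<Union>(set cs))) cs else 0)"
proof -
  let ?B = "\<Union>(set cs)"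
  have X: "X \<noteq> {}" "X \<inter> ?B = {}" and A_eq: "A = X \<union> ?B" and B: "is_comp ?B cs"
    using c by (simp_all add: is_comp_Cons)
  have fin: "finite X" "finite ?B"
    using A A_eq by simp_all
  have T': "quasi_order (X \<union> ?B) T"
    using T A_eq by simp
  have "\<psi> X (restr_qo T X) [X] = eps'_top (restr_qo T X)"
    using tb fin(1) quasi_order_restr_qo[OF T' Un_upper1] X(1)
      sum_eps'_comp[OF fin(1), of "\<psi> X (restr_qo T X)"]
    unfolding tb_morphism_eps_def by simp
  moreover have "\<psi> (X \<union> ?B) T ([X] @ cs) =
      (if open_qo T ?B then \<psi> X (restr_qo T X) [X] * \<psi> ?B (restr_qo T ?B) cs else 0)"
    using tb fin X(2) T' is_comp_singleton[OF X(1)] B unfolding tb_morphism_eps_def by blast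
  ultimately show ?thesis
    using A_eq by simp
qed

lemma tb_morphism_unique:
  assumes "tb_morphism_eps \<psi>\<^sub>1" "tb_morphism_eps \<psi>\<^sub>2"
  shows "finite A \<Longrightarrow> quasi_order A T \<Longrightarrow> \<psi>\<^sub>1 A T c = \<psi>\<^sub>2 A T c"
proof (induction c arbitrary: A T)
  case Nil
  then show ?case
    using tb_morphism_Nil[OF assms(1)] tb_morphism_Nil[OF assms(2)] by simp
next
  case (Cons X cs)
  show ?case
  proof (cases "is_comp A (X # cs)")
    case True
    then have "\<Union>(set cs) \<subseteq> A"
      by (auto simp: is_comp_Cons)
    then have "\<psi>\<^sub>1 (\<Union>(set cs)) (restr_qo T (\<Union>(set cs))) cs = \<psi>\<^sub>2 (\<Union>(set cs)) (restr_qo T (\<Union>(set cs))) cs"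
      using Cons quasi_order_restr_qo finite_subset by metis
    then show ?thesis
      using True Cons.prems tb_morphism_Cons[OF assms(1)] tb_morphism_Cons[OF assms(2)] by simp
  next
    case False
    then show ?thesis
      using Cons.prems tb_morphism_eq_0[OF assms(1)] tb_morphism_eq_0[OF assms(2)] by simp
  qed
qed

theorem theorem41:
  shows "tb_morphism_eps (phi :: 'a set \<Rightarrow> ('a \<times> 'a) set \<Rightarrow> 'a set list \<Rightarrow> 'k::field) \<and>
    (\<forall>\<psi> :: 'a set \<Rightarrow> ('a \<times> 'a) set \<Rightarrow> 'a set list \<Rightarrow> 'k. tb_morphism_eps \<psi> \<longrightarrow>
       (\<forall>A T c. finite A \<and> quasi_order A T \<longrightarrow> \<psi> A T c = phi A T c))"
  using tb_morphism_phi tb_morphism_unique[OF _ tb_morphism_phi] by blast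

end
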